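(* Let $B\in\mathbb{R}^{r\times q}$ have orthonormal rows, with columns $b_1,\dots,b_q$, and let $\hat c_{ik}\in\{-1,+1\}$ be arbitrary signs. Let $\hat U\in\mathbb{R}^{n\times r}$ be a minimizer of $$\tilde U\mapsto\sum_{k=1}^q\sum_{i=1}^m\big(\hat c_{ik}y_{ik}-a_{ik}'\tilde U b_k\big)^2,$$ and let $\hat U = U^+R_U$ be a QR decomposition with $U^+\in\mathbb{R}^{n\times r}$ having orthonormal columns. Define, for $W\in\mathbb{R}^{n\times r}$, $$\mathrm{Term1}(W)=\sum_{i,k}b_k'W'a_{ik}a_{ik}'U^*(\tilde B^*B'b_k-\tilde b_k^* ),\quad \mathrm{Term2}(W)=\sum_{i,k}(c_{ik}\hat c_{ik}-1)(a_{ik}'Wb_k)(a_{ik}'x_k^* ),$$ $$\mathrm{Term3}(W)=\sum_{i,k}(a_{ik}'Wb_k)^2,$$ let $\mathcal{S}_W=\{W\in\mathbb{R}^{n\times r}:\|W\|_F=1\}$, and $$\mathrm{MainTerm}=\frac{\max_{W\in\mathcal{S}_W}|\mathrm{Term1}(W)|+\max_{W\in\mathcal{S}_W}|\mathrm{Term2}(W)|}{\min_{W\in\mathcal{S}_W}\mathrm{Term3}(W)}.$$ Assume $\min_{W\in\mathcal{S}_W}\mathrm{Term3}(W)>0$ (so the minimizer $\hat U$ is unique) and $\sigma_{\min}(U^*\Sigma^*B^*B')>\mathrm{MainTerm}$. Then $$\mathrm{SE}(U^+,U^* )\le\frac{\mathrm{MainTerm}}{\sigma_{\min}(U^*\Si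gma^*B^*B')-\mathrm{MainTerm}}.$$
   Context: $X^*=[x_1^*,\dots,x_q^*]\in\mathbb{R}^{n\times q}$ has rank $r$ with reduced SVD $X^*=U^*\Sigma^*B^*$, where $U^*\in\mathbb{R}^{n\times r}$ has orthonormal columns, $\Sigma^*\in\mathbb{R}^{r\times r}$ is diagonal positive, $B^*\in\mathbb{R}^{r\times q}$ has orthonormal rows; $\tilde B^*=\Sigma^*B^*$ with columns $\tilde b_k^*$, so $x_k^*=U^*\tilde b_k^*$. The vectors $a_{ik}\in\mathbb{R}^n$ ($i\in[m],k\in[q]$) are arbitrary (deterministic), $y_{ik}=|a_{ik}'x_k^*|$, and $c_{ik}\in\{-1,+1\}$ is the sign of $a_{ik}'x_k^*$ (any choice if it is zero), so $y_{ik}=c_{ik}a_{ik}'x_k^*$. $\sigma_{\min}(\cdot)$ is the $r$-th (smallest of the top $r$) singular value of an $n\times r$ matrix. For matrices $U_1,U_2$ with orthonormal columns, $\mathrm{SE}(U_1,U_2)=\|(I-U_1U_1')U_2\|$. *)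

theory Defs
  imports "HOL-Analysis.Analysis"
begin

text \<open>Matrices are HOL-Analysis matrices: an n x r real matrix is a value of type
  real^'r^'n (rows indexed by 'n, columns by 'r). The Euclidean norm on this type is
  the Frobenius norm.\<close>

definition orthonormal_cols :: "real^'r^'n \<Rightarrow> bool" where
  "orthonormal_cols U \<longleftrightarrow> transpose U ** U = mat 1"

definition orthonormal_rows :: "real^'q^'r \<Rightarrow> bool" where
  "orthonormal_rows B \<longleftrightarrow> B ** transpose B = mat 1"

definition upper_triangular_mat :: "real^('r::{finite,linorder})^('r::{finite,linorder}) \<Rightarrow> bool" where
  "upper_triangular_mat R \<longleftrightarrow> (\<forall>i j. j < i \<longrightarrow> R $ i $ j = 0)"

definition spec_norm :: "real^'a^'b \<Rightarrow> real" where
  "spec_norm M = onorm (\<lambda>x. M *v x)"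

text \<open>r-th singular value of an n x r matrix (variational characterization):
  the minimum of |Mx| over unit vectors x in R^r.\<close>
definition sigma_min :: "real^'r^'n \<Rightarrow> real" where
  "sigma_min M = Inf {norm (M *v x) | x. norm x = 1}"

definition SE :: "real^'r^'n \<Rightarrow> real^'s^'n \<Rightarrow> real" where
  "SE U1 U2 = spec_norm ((mat 1 - U1 ** transpose U1) ** U2)"

end

theory Submission
  imports Defs
begin

(* Let D = Uhat - Ustar Sigma Bstar B'. The normal equations of the least-squares problem,
   together with chat y = chat c a'x, give Term3 D = Term2 D - Term1 D. As Term1 and Term2
   are linear and Term3 is quadratic, rescaling D to the unit sphere yields
   norm D <= MainTerm. With M = Sigma Bstar B' invertible, (I - Uplus Uplus') Ustar equals
   -(I - Uplus Uplus') D M^-1, because the columns of Uhat = Uplus RU lie in the range of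
   Uplus; hence SE Uplus Ustar <= norm D / sigma_min (Ustar M). *)

lemma linear_term_zero_if_quadratic_bound:
  fixes L Q :: real
  assumes "\<And>t. 2 * t * L \<le> t\<^sup>2 * Q"
  shows "L = 0"
proof (rule ccontr)
  assume "L \<noteq> 0"
  define s where "s = 1 / (\<bar>Q\<bar> + 1)"
  have s_pos: "s > 0" and sQ: "s * Q < 1"
    by (auto simp: s_def divide_less_eq)
  have "2 * (s * L\<^sup>2) \<le> (s * Q) * (s * L\<^sup>2)"
    using assms[of "s * L"] by (simp add: power2_eq_square algebra_simps)
  also have "\<dots> < s * L\<^sup>2"
    using mult_strict_right_mono[OF sQ, of "s * L\<^sup>2"] s_pos \<open>L \<noteq> 0\<close> by simp
  finally show False
    using s_pos \<open>L \<noteq> 0\<close> by (simp add: zero_less_mult_iff)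
qed

lemma least_squares_normal_equation:
  fixes f :: "'j \<Rightarrow> 'v::real_vector \<Rightarrow> real"
  assumes lin: "\<And>j. linear (f j)"
    and min: "\<And>x. (\<Sum>j\<in>J. (c j - f j x0)\<^sup>2) \<le> (\<Sum>j\<in>J. (c j - f j x)\<^sup>2)"
  shows "(\<Sum>j\<in>J. (c j - f j x0) * f j w) = 0"
proof (rule linear_term_zero_if_quadratic_bound)
  fix t :: real
  have "(c j - f j (x0 + t *\<^sub>R w))\<^sup>2 = (c j - f j x0)\<^sup>2 - 2 * t * ((c j - f j x0) * f j w) + t\<^sup>2 * (f j w)\<^sup>2"
    for j by (simp add: linear_add[OF lin] linear_scale[OF lin] power2_eq_square algebra_simps)
  then have "(\<Sum>j\<in>J. (c j - f j (x0 + t *\<^sub>R w))\<^sup>2) = (\<Sum>j\<in>J. (c j - f j x0)\<^sup>2)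
      - 2 * t * (\<Sum>j\<in>J. (c j - f j x0) * f j w) + t\<^sup>2 * (\<Sum>j\<in>J. (f j w)\<^sup>2)"
    by (simp add: sum.distrib sum_subtractf sum_distrib_left)
  then show "2 * t * (\<Sum>j\<in>J. (c j - f j x0) * f j w) \<le> t\<^sup>2 * (\<Sum>j\<in>J. (f j w)\<^sup>2)"
    using min[of "x0 + t *\<^sub>R w"] by simp
qed

lemma linear_inner_matrix_vector_mult: "linear (\<lambda>W::real^'m^'n. u \<bullet> (W *v v))"
  by (rule linearI) (simp_all add: matrix_vector_mult_add_rdistrib inner_add_right
      scaleR_matrix_vector_assoc[symmetric])

lemma abs_le_Sup_unit_sphere:
  fixes f :: "'a::euclidean_space \<Rightarrow> real"
  assumes "linear f" and "norm W = 1"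
  shows "\<bar>f W\<bar> \<le> Sup {\<bar>f W\<bar> | W. norm W = 1}"
proof -
  obtain C where "\<And>x. norm (f x) \<le> C * norm x"
    using linear_bounded[OF assms(1)] by blast
  then have "bdd_above {\<bar>f W\<bar> | W. norm W = 1}"
    by (intro bdd_aboveI[of _ C]) (auto, metis mult_1_right real_norm_def)
  then show ?thesis
    using assms(2) by (auto intro!: cSup_upper)
qed

lemma Inf_unit_sphere_le:
  fixes f :: "'a::real_normed_vector \<Rightarrow> real"
  assumes "\<And>W. 0 \<le> f W" and "norm W = 1"
  shows "Inf {f W | W. norm W = 1} \<le> f W"
proof -
  have "bdd_below {f W | W. norm W = 1}"
    using assms(1) by (intro bdd_belowI[of _ 0]) auto
  then show ?thesis
    using assms(2) by (auto intro!: cInf_lower)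
qed

lemma norm_le_of_homogeneous_identity:
  fixes T1 T2 T3 :: "'a::euclidean_space \<Rightarrow> real"
  assumes lin1: "linear T1" and lin2: "linear T2"
    and T3_scale: "\<And>t W. T3 (t *\<^sub>R W) = t\<^sup>2 * T3 W" and T3_nonneg: "\<And>W. 0 \<le> T3 W"
    and Inf_pos: "Inf {T3 W | W. norm W = 1} > 0"
    and identity: "T3 D = T2 D - T1 D"
  shows "norm D \<le> (Sup {\<bar>T1 W\<bar> | W. norm W = 1} + Sup {\<bar>T2 W\<bar> | W. norm W = 1})
                    / Inf {T3 W | W. norm W = 1}"
    (is "_ \<le> (?s1 + ?s2) / ?m")
proof -
  have bound: "T2 W - T1 W \<le> ?s1 + ?s2" if "norm W = 1" for W
    using abs_le_Sup_unit_sphere[OF lin1 that] abs_le_Sup_unit_sphere[OF lin2 that] by linarith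
  show ?thesis
  proof (cases "D = 0")
    case True
    obtain W0 :: 'a where "norm W0 = 1"
      using vector_choose_size[of 1] by auto
    have "0 \<le> ?s1 + ?s2"
      using abs_le_Sup_unit_sphere[OF lin1 \<open>norm W0 = 1\<close>]
        abs_le_Sup_unit_sphere[OF lin2 \<open>norm W0 = 1\<close>] by linarith
    with True Inf_pos show ?thesis by simp
  next
    case False
    define W where "W = (1 / norm D) *\<^sub>R D"
    have W_unit: "norm W = 1" and D_eq: "D = norm D *\<^sub>R W"
      using False by (simp_all add: W_def)
    have "(norm D)\<^sup>2 * T3 W = norm D * (T2 W - T1 W)"
      using identity D_eq T3_scale linear_scale[OF lin1] linear_scale[OF lin2]
      by (metis right_diff_distrib real_scaleR_def)
    then have "norm D * T3 W = T2 W - T1 W"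
      using False by (simp add: power2_eq_square)
    moreover have "norm D * ?m \<le> norm D * T3 W"
      by (intro mult_left_mono Inf_unit_sphere_le[OF T3_nonneg W_unit]) simp
    ultimately have "norm D * ?m \<le> ?s1 + ?s2"
      using bound[OF W_unit] by linarith
    with Inf_pos show ?thesis
      by (simp add: pos_le_divide_eq)
  qed
qed

lemma norm_matrix_vector_mult_le: "norm ((A::real^'m^'n) *v x) \<le> norm A * norm x"
proof -
  have "(norm (A *v x))\<^sup>2 = (\<Sum>i\<in>UNIV. ((A *v x) $ i)\<^sup>2)"
    unfolding power2_norm_eq_inner inner_vec_def by (simp add: power2_eq_square)
  also have "\<dots> \<le> (\<Sum>i\<in>UNIV. (norm (A $ i))\<^sup>2 * (norm x)\<^sup>2)"
  proof (rule sum_mono)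
    fix i
    have "\<bar>(A *v x) $ i\<bar> \<le> norm (A $ i) * norm x"
      by (simp add: matrix_vector_mul_component Cauchy_Schwarz_ineq2)
    then have "\<bar>(A *v x) $ i\<bar>\<^sup>2 \<le> (norm (A $ i) * norm x)\<^sup>2"
      by (rule power_mono) simp
    then show "((A *v x) $ i)\<^sup>2 \<le> (norm (A $ i))\<^sup>2 * (norm x)\<^sup>2"
      by (simp add: power_mult_distrib)
  qed
  also have "\<dots> = (norm A)\<^sup>2 * (norm x)\<^sup>2"
  proof -
    have "(norm A)\<^sup>2 = (\<Sum>i\<in>UNIV. (norm (A $ i))\<^sup>2)"
      unfolding power2_norm_eq_inner inner_vec_def ..
    then show ?thesis by (simp add: sum_distrib_right)
  qed
  also have "\<dots> = (norm A * norm x)\<^sup>2"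
    by (simp add: power_mult_distrib)
  finally show ?thesis
    by (rule power2_le_imp_le) simp
qed

lemma column_matrix_mult: "column k ((A::real^'m^'n) ** M) = A *v column k M"
  by (simp add: vec_eq_iff column_def matrix_matrix_mult_def matrix_vector_mult_def)

lemma inner_matrix_vector_mult_left: "((A::real^'m^'n) *v x) \<bullet> y = x \<bullet> (transpose A *v y)"
  by (metis dot_lmul_matrix vector_transpose_matrix)

lemma inner_orthonormal_cols_mult:
  assumes "orthonormal_cols U"
  shows "(U *v w) \<bullet> (U *v w) = w \<bullet> w"
  using assms by (simp add: inner_matrix_vector_mult_left matrix_vector_mul_assoc orthonormal_cols_def)

lemma norm_orthonormal_cols_mult:
  assumes "orthonormal_cols U"
  shows "norm (U *v w) = norm w"
  using inner_orthonormal_cols_mult[OF assms] by (simp add: norm_eq_sqrt_inner)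

lemma orthonormal_cols_projection_fixes:
  assumes "orthonormal_cols U"
  shows "U *v (transpose U *v (U *v w)) = U *v w"
  using assms by (simp add: matrix_vector_mul_assoc orthonormal_cols_def)

lemma norm_orthogonal_projection_complement_le:
  assumes "orthonormal_cols U"
  shows "norm (v - U *v (transpose U *v v)) \<le> norm v"
proof -
  define w where "w = transpose U *v v"
  have "(U *v w) \<bullet> v = w \<bullet> w"
    by (simp add: inner_matrix_vector_mult_left w_def)
  with inner_orthonormal_cols_mult[OF assms, of w]
  have "(norm v)\<^sup>2 = (norm (v - U *v w))\<^sup>2 + (norm (U *v w))\<^sup>2"
    by (simp add: power2_norm_eq_inner inner_diff_left inner_diff_right inner_commute)
  then have "(norm (v - U *v w))\<^sup>2 \<le> (norm v)\<^sup>2"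
    by simp
  then show ?thesis
    unfolding w_def by (rule power2_le_imp_le) simp
qed

lemma sigma_min_mult_norm_le: "sigma_min M * norm x \<le> norm (M *v x)"
proof (cases "x = 0")
  case False
  define w where "w = (1 / norm x) *\<^sub>R x"
  have "bdd_below {norm (M *v x) | x. norm x = 1}"
    by (rule bdd_belowI[of _ 0]) auto
  moreover have "norm w = 1"
    using False by (simp add: w_def)
  ultimately have "sigma_min M \<le> norm (M *v w)"
    unfolding sigma_min_def by (auto intro!: cInf_lower)
  also have "\<dots> = norm (M *v x) / norm x"
    using False by (simp add: w_def matrix_vector_mult_scaleR)
  finally show ?thesis
    using False by (simp add: pos_le_divide_eq)
qed simp

lemma invertible_if_sigma_min_mult_pos:
  fixes A :: "real^'r^'n" and M :: "real^'r^'r"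
  assumes "sigma_min (A ** M) > 0"
  shows "invertible M"
proof -
  have "inj ((*v) M)"
  proof (rule injI)
    fix x1 x2
    assume "M *v x1 = M *v x2"
    then have "(A ** M) *v (x1 - x2) = 0"
      by (simp add: matrix_vector_mult_diff_distrib flip: matrix_vector_mul_assoc)
    then show "x1 = x2"
      using sigma_min_mult_norm_le[of "A ** M" "x1 - x2"] assms by (simp add: mult_le_0_iff)
  qed
  then show ?thesis
    by (simp add: invertible_left_inverse matrix_left_invertible_injective)
qed

lemma SE_le_norm_diff_div_sigma_min:
  fixes Ustar :: "real^'r^'n" and M :: "real^'r^'r" and Uplus :: "real^'s^'n" and R :: "real^'r^'s"
  assumes Ustar: "orthonormal_cols Ustar" and Uplus: "orthonormal_cols Uplus"
    and sigma_pos: "sigma_min (Ustar ** M) > 0"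
  shows "SE Uplus Ustar \<le> norm (Uplus ** R - Ustar ** M) / sigma_min (Ustar ** M)"
proof -
  define \<sigma> where "\<sigma> = sigma_min (Ustar ** M)"
  define D where "D = Uplus ** R - Ustar ** M"
  obtain M' where M_M': "M ** M' = mat 1"
    using invertible_if_sigma_min_mult_pos[OF sigma_pos] invertible_def by blast
  have pointwise:
    "norm (((mat 1 - Uplus ** transpose Uplus) ** Ustar) *v x) \<le> norm D / \<sigma> * norm x" for x
  proof -
    define z where "z = M' *v x"
    have "Ustar *v x = (Ustar ** M) *v z"
      by (simp add: z_def matrix_vector_mul_assoc M_M' flip: matrix_mul_assoc)
    then have Ustar_x: "Ustar *v x = Uplus *v (R *v z) - D *v z"
      by (simp add: D_def matrix_vector_mult_diff_rdistrib matrix_vector_mul_assoc)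
    have "((mat 1 - Uplus ** transpose Uplus) ** Ustar) *v x
        = Ustar *v x - Uplus *v (transpose Uplus *v (Ustar *v x))"
      by (simp add: matrix_vector_mult_diff_rdistrib flip: matrix_vector_mul_assoc)
    also have "\<dots> = - (D *v z - Uplus *v (transpose Uplus *v (D *v z)))"
      unfolding Ustar_x matrix_vector_mult_diff_distrib orthonormal_cols_projection_fixes[OF Uplus]
      by simp
    finally have "norm (((mat 1 - Uplus ** transpose Uplus) ** Ustar) *v x)
        = norm (D *v z - Uplus *v (transpose Uplus *v (D *v z)))"
      by (simp only: norm_minus_cancel)
    also have "\<dots> \<le> norm D * norm z"
      using norm_orthogonal_projection_complement_le[OF Uplus] norm_matrix_vector_mult_le
      by (rule order_trans)
    also have "\<dots> \<le> norm D * (norm x / \<sigma>)"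
    proof (intro mult_left_mono)
      have "\<sigma> * norm z \<le> norm (Ustar *v x)"
        using sigma_min_mult_norm_le[of "Ustar ** M" z]
        by (simp add: \<sigma>_def z_def matrix_vector_mul_assoc M_M' flip: matrix_mul_assoc)
      then show "norm z \<le> norm x / \<sigma>"
        using sigma_pos
        by (simp add: \<sigma>_def norm_orthonormal_cols_mult[OF Ustar] pos_le_divide_eq mult.commute)
    qed simp
    finally show ?thesis by simp
  qed
  show ?thesis
    unfolding SE_def spec_norm_def D_def[symmetric] \<sigma>_def[symmetric]
    using pointwise by (rule onorm_le)
qed

locale signed_least_squares =
  fixes Xstar :: "real^'q::finite^'n::finite"
    and Ustar :: "real^'r::finite^'n"
    and Sigma :: "real^'r^'r"
    and Bstar B :: "real^'q^'r"
    and a :: "'m::finite \<Rightarrow> 'q \<Rightarrow> real^'n"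
    and y c chat :: "'m \<Rightarrow> 'q \<Rightarrow> real"
    and Uhat :: "real^'r^'n"
    and Term1 Term2 Term3 :: "real^'r^'n \<Rightarrow> real"
  assumes svd: "Xstar = Ustar ** Sigma ** Bstar"
    and sign: "\<And>i k. y i k = c i k * (a i k \<bullet> column k Xstar)"
    and Uhat_min: "\<And>U.
          (\<Sum>k\<in>UNIV. \<Sum>i\<in>UNIV. (chat i k * y i k - a i k \<bullet> (Uhat *v column k B))\<^sup>2)
          \<le> (\<Sum>k\<in>UNIV. \<Sum>i\<in>UNIV. (chat i k * y i k - a i k \<bullet> (U *v column k B))\<^sup>2)"
    and Term1_def: "\<And>W. Term1 W = (\<Sum>i\<in>UNIV. \<Sum>k\<in>UNIV.
          (a i k \<bullet> (W *v column k B)) *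
          (a i k \<bullet> (Ustar *v ((Sigma ** Bstar) ** transpose B *v column k B
                                - column k (Sigma ** Bstar)))))"
    and Term2_def: "\<And>W. Term2 W = (\<Sum>i\<in>UNIV. \<Sum>k\<in>UNIV.
          (c i k * chat i k - 1) * (a i k \<bullet> (W *v column k B)) * (a i k \<bullet> column k Xstar))"
    and Term3_def: "\<And>W. Term3 W = (\<Sum>i\<in>UNIV. \<Sum>k\<in>UNIV. (a i k \<bullet> (W *v column k B))\<^sup>2)"
begin

lemma normal_equation:
  "(\<Sum>i\<in>UNIV. \<Sum>k\<in>UNIV.
      (chat i k * y i k - a i k \<bullet> (Uhat *v column k B)) * (a i k \<bullet> (W *v column k B))) = 0"
proof -
  define f where "f = (\<lambda>(k, i) W. a i k \<bullet> (W *v column k B))"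
  define target where "target = (\<lambda>(k, i). chat i k * y i k)"
  have sum_pairs: "(\<Sum>j\<in>UNIV. h j) = (\<Sum>k\<in>UNIV. \<Sum>i\<in>UNIV. h (k, i))" for h :: "'q \<times> 'm \<Rightarrow> real"
    by (simp add: sum.cartesian_product' flip: UNIV_Times_UNIV)
  have "(\<Sum>j\<in>UNIV. (target j - f j Uhat) * f j W) = 0"
    by (rule least_squares_normal_equation)
      (simp_all add: Uhat_min f_def target_def linear_inner_matrix_vector_mult sum_pairs
        split: prod.split)
  then show ?thesis
    by (subst sum.swap) (simp add: f_def target_def sum_pairs)
qed

lemma residual_identity:
  fixes D :: "real^'r^'n"
  defines "D \<equiv> Uhat - Ustar ** Sigma ** Bstar ** transpose B"
  shows "Term3 D = Term2 D - Term1 D"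
proof -
  define G where "G = Ustar ** Sigma ** Bstar ** transpose B"
  have x_col: "Ustar *v column k (Sigma ** Bstar) = column k Xstar" for k
    by (metis column_matrix_mult matrix_mul_assoc svd)
  have G_col: "Ustar *v ((Sigma ** Bstar) ** transpose B *v column k B) = G *v column k B" for k
    by (simp add: G_def matrix_vector_mul_assoc matrix_mul_assoc)
  have Uhat_col: "Uhat *v column k B = G *v column k B + D *v column k B" for k
    by (simp add: D_def G_def matrix_vector_mult_diff_rdistrib)
  have "Term2 D - Term1 D - Term3 D = (\<Sum>i\<in>UNIV. \<Sum>k\<in>UNIV.
      (chat i k * y i k - a i k \<bullet> (Uhat *v column k B)) * (a i k \<bullet> (D *v column k B)))"
    unfolding Term1_def Term2_def Term3_def sum_subtractf[symmetric]
    by (intro sum.cong refl)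
      (simp add: matrix_vector_mult_diff_distrib x_col G_col Uhat_col sign inner_diff_right
        inner_add_right algebra_simps power2_eq_square)
  with normal_equation show ?thesis
    by simp
qed

lemma linear_Term1: "linear Term1"
  by (rule linearI) (simp_all add: Term1_def matrix_vector_mult_add_rdistrib inner_add_right
      distrib_right sum.distrib scaleR_matrix_vector_assoc[symmetric] sum_distrib_left mult.assoc)

lemma linear_Term2: "linear Term2"
  by (rule linearI) (simp_all add: Term2_def matrix_vector_mult_add_rdistrib inner_add_right
      distrib_left distrib_right sum.distrib scaleR_matrix_vector_assoc[symmetric] sum_distrib_left
      mult.left_commute mult.assoc)

lemma Term3_scaleR: "Term3 (t *\<^sub>R W) = t\<^sup>2 * Term3 W"
  by (simp add: Term3_def scaleR_matrix_vector_assoc[symmetric] power_mult_distrib sum_distrib_left)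

lemma Term3_nonneg: "0 \<le> Term3 W"
  by (simp add: Term3_def sum_nonneg)

lemma norm_error_le:
  assumes "Inf {Term3 W | W. norm W = 1} > 0"
  shows "norm (Uhat - Ustar ** Sigma ** Bstar ** transpose B)
           \<le> (Sup {\<bar>Term1 W\<bar> | W. norm W = 1} + Sup {\<bar>Term2 W\<bar> | W. norm W = 1})
             / Inf {Term3 W | W. norm W = 1}"
  using linear_Term1 linear_Term2 Term3_scaleR Term3_nonneg assms residual_identity
  by (rule norm_le_of_homogeneous_identity)

end

theorem mainTheorem6:
  fixes Xstar :: "real^'q::finite^'n::finite"
    and Ustar :: "real^('r::{finite,linorder})^'n"
    and Sigma :: "real^('r::{finite,linorder})^('r::{finite,linorder})"
    and Bstar :: "real^'q^('r::{finite,linorder})"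
    and a :: "'m::finite \<Rightarrow> 'q \<Rightarrow> real^'n"
    and y c chat :: "'m \<Rightarrow> 'q \<Rightarrow> real"
    and B :: "real^'q^('r::{finite,linorder})"
    and Uhat Uplus :: "real^('r::{finite,linorder})^'n"
    and RU :: "real^('r::{finite,linorder})^('r::{finite,linorder})"
    and Term1 Term2 Term3 :: "real^('r::{finite,linorder})^'n \<Rightarrow> real"
    and MainTerm :: real
  assumes Xstar_rank: "rank Xstar = CARD('r::{finite,linorder})"
    and svd: "Xstar = Ustar ** Sigma ** Bstar"
    and Ustar_on: "orthonormal_cols Ustar"
    and Sigma_diag: "\<forall>i j. i \<noteq> j \<longrightarrow> Sigma $ i $ j = 0"
    and Sigma_pos: "\<forall>i. Sigma $ i $ i > 0"
    and Bstar_on: "orthonormal_rows Bstar"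
    and y_def: "\<forall>i k. y i k = \<bar>a i k \<bullet> column k Xstar\<bar>"
    and c_sign: "\<forall>i k. c i k \<in> {-1, 1} \<and> y i k = c i k * (a i k \<bullet> column k Xstar)"
    and B_on: "orthonormal_rows B"
    and chat_sign: "\<forall>i k. chat i k \<in> {-1, 1}"
    and Uhat_min: "\<forall>U :: real^('r::{finite,linorder})^'n.
          (\<Sum>k\<in>UNIV. \<Sum>i\<in>UNIV. (chat i k * y i k - a i k \<bullet> (Uhat *v column k B))\<^sup>2)
          \<le> (\<Sum>k\<in>UNIV. \<Sum>i\<in>UNIV. (chat i k * y i k - a i k \<bullet> (U *v column k B))\<^sup>2)"
    and QR: "Uhat = Uplus ** RU" "orthonormal_cols Uplus" "upper_triangular_mat RU"
    and Term1_def: "\<forall>W. Term1 W = (\<Sum>i\<in>UNIV. \<Sum>k\<in>UNIV.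
          (a i k \<bullet> (W *v column k B)) *
          (a i k \<bullet> (Ustar *v ((Sigma ** Bstar) ** transpose B *v column k B
                                - column k (Sigma ** Bstar)))))"
    and Term2_def: "\<forall>W. Term2 W = (\<Sum>i\<in>UNIV. \<Sum>k\<in>UNIV.
          (c i k * chat i k - 1) * (a i k \<bullet> (W *v column k B)) * (a i k \<bullet> column k Xstar))"
    and Term3_def: "\<forall>W. Term3 W = (\<Sum>i\<in>UNIV. \<Sum>k\<in>UNIV. (a i k \<bullet> (W *v column k B))\<^sup>2)"
    and MainTerm_def: "MainTerm =
          (Sup {\<bar>Term1 W\<bar> | W. norm W = 1} + Sup {\<bar>Term2 W\<bar> | W. norm W = 1})
          / Inf {Term3 W | W. norm W = 1}"
    and Term3_pos: "Inf {Term3 W | W. norm W = 1} > 0"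
    and gap: "sigma_min (Ustar ** Sigma ** Bstar ** transpose B) > MainTerm"
  shows "SE Uplus Ustar
           \<le> MainTerm / (sigma_min (Ustar ** Sigma ** Bstar ** transpose B) - MainTerm)"
proof -
  \<comment> \<open>The rank, the diagonal structure of Sigma, the orthonormality of Bstar and B, the
    values of the signs and the triangularity of RU are not needed.\<close>
  interpret signed_least_squares Xstar Ustar Sigma Bstar B a y c chat Uhat Term1 Term2 Term3
    using svd c_sign Uhat_min Term1_def Term2_def Term3_def by unfold_locales blast+
  define \<sigma> where "\<sigma> = sigma_min (Ustar ** Sigma ** Bstar ** transpose B)"
  define D where "D = Uhat - Ustar ** Sigma ** Bstar ** transpose B"
  have D_le: "norm D \<le> MainTerm"
    unfolding D_def MainTerm_def using Term3_pos by (rule norm_error_le)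
  then have MainTerm_nonneg: "0 \<le> MainTerm"
    using norm_ge_zero order_trans by blast
  have \<sigma>_gap: "MainTerm < \<sigma>"
    using gap by (simp add: \<sigma>_def)
  have "SE Uplus Ustar \<le> norm D / \<sigma>"
    using SE_le_norm_diff_div_sigma_min[of Ustar Uplus "Sigma ** Bstar ** transpose B" RU]
      Ustar_on QR \<sigma>_gap MainTerm_nonneg by (simp add: D_def \<sigma>_def matrix_mul_assoc)
  also have "\<dots> \<le> MainTerm / \<sigma>"
    using D_le \<sigma>_gap MainTerm_nonneg by (simp add: divide_right_mono)
  also have "\<dots> \<le> MainTerm / (\<sigma> - MainTerm)"
    using \<sigma>_gap MainTerm_nonneg by (intro frac_le) auto
  finally show ?thesis
    unfolding \<sigma>_def .
qed

end
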